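(* Let $H$ be a Kekul\'ean hexagonal system. Then $\zeta(H,x)=C(R(H),x)$, i.e. $z(H,i)=\alpha_i(R(H))$ for every $i\ge 0$.
   Context: A hexagonal system is a 2-connected finite plane graph in which every interior face is a regular hexagon of side length one (equivalently, a cycle of the infinite hexagonal lattice together with its interior); its hexagons are the boundaries of its interior faces. It is Kekul\'ean if it has a perfect matching. A Clar cover of $H$ is a spanning subgraph of $H$ each of whose components is either a hexagon of $H$ or a single edge ($K_2$). Let $z(H,k)$ be the number of Clar covers of $H$ with exactly $k$ hexagon components, and $Cl(H)$ the maximum such $k$. The Clar covering polynomial is $\zeta(H,x)=\sum_{k=0}^{Cl(H)} z(H,k)x^k$. The resonance graph $R(H)$ has the perfect matchings of $H$ as vertices, two being adjacent iff their symmetric difference is the edge set of a hexagon of $H$. For a graph $G$, the cube polynomial is $C(G,x)=\sum_{i\ge0}\alpha_i(G)x^i$, where $\alpha_i(G)$ is the number of induced subgraphs of $G$ isomorphic to the $i$-dimensional hypercube $Q_i$. *)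

theory Defs
  imports Main
begin

text \<open>We use the standard brick-wall embedding of the hexagonal (honeycomb) lattice:
vertices are integer points; horizontal edges join (x,y) and (x+1,y); vertical edges
join (x,y) and (x,y+1) when x+y is even.  Its bounded faces (hexagons) are the bricks
with lower-left corner (x,y), x+y even.  This plane graph is isomorphic (as a plane graph)
to the hexagonal lattice of regular unit hexagons.\<close>

type_synonym vert = "int \<times> int"
type_synonym edge = "vert set"

definition lat_adj :: "vert \<Rightarrow> vert \<Rightarrow> bool" where
  "lat_adj u v \<longleftrightarrow>
     (snd u = snd v \<and> (fst v = fst u + 1 \<or> fst u = fst v + 1)) \<or>
     (fst u = fst v \<and> ((snd v = snd u + 1 \<and> even (fst u + snd u)) \<or>
                        (snd u = snd v + 1 \<and> even (fst v + snd v))))"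

definition is_cell :: "vert \<Rightarrow> bool" where
  "is_cell c \<longleftrightarrow> even (fst c + snd c)"

definition hex_edges :: "vert \<Rightarrow> edge set" where
  "hex_edges c = (case c of (x, y) \<Rightarrow>
     {{(x,y),(x+1,y)}, {(x+1,y),(x+2,y)}, {(x,y+1),(x+1,y+1)}, {(x+1,y+1),(x+2,y+1)},
      {(x,y),(x,y+1)}, {(x+2,y),(x+2,y+1)}})"

definition hex_verts :: "vert \<Rightarrow> vert set" where
  "hex_verts c = \<Union> (hex_edges c)"

definition lattice_cycle :: "vert list \<Rightarrow> bool" where
  "lattice_cycle vs \<longleftrightarrow> length vs \<ge> 3 \<and> distinct vs \<and>
     (\<forall>i < length vs. lat_adj (vs ! i) (vs ! ((i + 1) mod length vs)))"

definition cyc_edges :: "vert list \<Rightarrow> edge set" where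
  "cyc_edges vs = {{vs ! i, vs ! ((i + 1) mod length vs)} | i. i < length vs}"

text \<open>A cell lies in the interior of the cycle iff the set of cells reachable from it
without crossing the cycle is finite (the exterior region is unbounded).\<close>

definition cell_step :: "edge set \<Rightarrow> vert \<Rightarrow> vert \<Rightarrow> bool" where
  "cell_step C h h' \<longleftrightarrow> is_cell h \<and> is_cell h' \<and> h \<noteq> h' \<and>
     (\<exists>e. e \<in> hex_edges h \<and> e \<in> hex_edges h' \<and> e \<notin> C)"

definition inner_cell :: "edge set \<Rightarrow> vert \<Rightarrow> bool" where
  "inner_cell C h \<longleftrightarrow> is_cell h \<and> finite {h'. (cell_step C)\<^sup>*\<^sup>* h h'}"

text \<open>The hexagonal system determined by a lattice cycle: the cycle together with its
interior.  Vertices, edges and hexagons (each hexagon given by its edge set).\<close>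

definition hs_hex :: "vert list \<Rightarrow> edge set set" where
  "hs_hex vs = hex_edges ` {h. inner_cell (cyc_edges vs) h}"

definition hs_E :: "vert list \<Rightarrow> edge set" where
  "hs_E vs = cyc_edges vs \<union> \<Union> (hs_hex vs)"

definition hs_V :: "vert list \<Rightarrow> vert set" where
  "hs_V vs = set vs \<union> \<Union> (hs_E vs)"

definition perfect_matching :: "'a set \<Rightarrow> 'a set set \<Rightarrow> 'a set set \<Rightarrow> bool" where
  "perfect_matching V E M \<longleftrightarrow> M \<subseteq> E \<and> (\<forall>v\<in>V. \<exists>!e. e \<in> M \<and> v \<in> e)"

definition kekulean :: "'a set \<Rightarrow> 'a set set \<Rightarrow> bool" where
  "kekulean V E \<longleftrightarrow> (\<exists>M. perfect_matching V E M)"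

definition comp_verts :: "'a set set \<Rightarrow> 'a \<Rightarrow> 'a set" where
  "comp_verts F v = {u. (\<lambda>a b. {a, b} \<in> F)\<^sup>*\<^sup>* v u}"

definition comp_edges :: "'a set set \<Rightarrow> 'a \<Rightarrow> 'a set set" where
  "comp_edges F v = {e \<in> F. e \<subseteq> comp_verts F v}"

definition clar_cover :: "'a set \<Rightarrow> 'a set set \<Rightarrow> 'a set set set \<Rightarrow> 'a set set \<Rightarrow> bool" where
  "clar_cover V E Hx F \<longleftrightarrow> F \<subseteq> E \<and>
     (\<forall>v\<in>V. (comp_edges F v \<in> Hx \<and> comp_verts F v = \<Union> (comp_edges F v)) \<or>
             (\<exists>a b. a \<noteq> b \<and> comp_verts F v = {a, b} \<and> comp_edges F v = {{a, b}}))"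

definition hex_components :: "'a set \<Rightarrow> 'a set set set \<Rightarrow> 'a set set \<Rightarrow> 'a set set set" where
  "hex_components V Hx F = {comp_edges F v | v. v \<in> V \<and> comp_edges F v \<in> Hx}"

definition clar_number_z :: "'a set \<Rightarrow> 'a set set \<Rightarrow> 'a set set set \<Rightarrow> nat \<Rightarrow> nat" where
  "clar_number_z V E Hx k = card {F. clar_cover V E Hx F \<and> card (hex_components V Hx F) = k}"

definition res_verts :: "'a set \<Rightarrow> 'a set set \<Rightarrow> 'a set set set" where
  "res_verts V E = {M. perfect_matching V E M}"

definition res_adj :: "'a set set set \<Rightarrow> 'a set set \<Rightarrow> 'a set set \<Rightarrow> bool" where
  "res_adj Hx M M' \<longleftrightarrow> (M - M') \<union> (M' - M) \<in> Hx"

definition cube_adj :: "nat set \<Rightarrow> nat set \<Rightarrow> bool" where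
  "cube_adj A B \<longleftrightarrow> card ((A - B) \<union> (B - A)) = 1"

definition cube_count :: "'v set \<Rightarrow> ('v \<Rightarrow> 'v \<Rightarrow> bool) \<Rightarrow> nat \<Rightarrow> nat" where
  "cube_count VG adj i = card {S. S \<subseteq> VG \<and>
      (\<exists>f. bij_betw f (Pow {..<i}) S \<and>
           (\<forall>A\<in>Pow {..<i}. \<forall>B\<in>Pow {..<i}. cube_adj A B \<longleftrightarrow> adj (f A) (f B)))}"

end

theory Submission
  imports Defs
begin

text \<open>
  Let \<open>F\<close> be a Clar cover with hexagon components \<open>h\<^sub>1, \<dots>, h\<^sub>k\<close>. Choosing one of the
  two perfect matchings in every hexagon turns \<open>F\<close> into a perfect matching \<open>M\<close> for which the
  \<open>h\<^sub>j\<close> are pairwise disjoint and \<open>M\<close>-alternating; the perfect matchings inside \<open>F\<close> are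
  then exactly the \<open>M \<triangle> \<Union>{h\<^sub>j | j \<in> A}\<close>, \<open>A \<subseteq> {1..k}\<close>, and they span an induced
  \<open>k\<close>-cube of the resonance graph. Conversely, since distinct hexagons share at most one edge,
  opposite edges of a 4-cycle of the resonance graph carry the same hexagon; hence an induced
  cube is generated by the hexagons on the edges at one of its vertices, which are again
  pairwise disjoint and alternating, and the union of its vertices is a Clar cover. So
  \<open>F \<mapsto> {M. M \<subseteq> F}\<close> is a bijection between Clar covers with \<open>k\<close> hexagons and induced
  \<open>k\<close>-cubes.
\<close>

lemma symp_edge_rel: "symp (\<lambda>a b. {a, b} \<in> F)"
  by (auto intro: sympI simp: insert_commute)

lemma comp_verts_self: "v \<in> comp_verts F v"
  by (simp add: comp_verts_def)

lemma comp_verts_step: "u \<in> comp_verts F v \<Longrightarrow> {u, w} \<in> F \<Longrightarrow> w \<in> comp_verts F v"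
  unfolding comp_verts_def by (auto intro: rtranclp.rtrancl_into_rtrancl)

lemma comp_verts_subset_closed:
  assumes "v \<in> X" and "\<And>a c. a \<in> X \<Longrightarrow> {a, c} \<in> F \<Longrightarrow> c \<in> X"
  shows "comp_verts F v \<subseteq> X"
proof
  fix u assume "u \<in> comp_verts F v"
  then have "(\<lambda>a b. {a, b} \<in> F)\<^sup>*\<^sup>* v u" by (simp add: comp_verts_def)
  then show "u \<in> X" by (induction rule: rtranclp_induct) (use assms in auto)
qed

lemma comp_verts_eq:
  assumes "u \<in> comp_verts F v" shows "comp_verts F u = comp_verts F v"
proof -
  have vu: "(\<lambda>a b. {a, b} \<in> F)\<^sup>*\<^sup>* v u" using assms by (simp add: comp_verts_def)
  moreover have "(\<lambda>a b. {a, b} \<in> F)\<^sup>*\<^sup>* u v"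
    by (rule sympD[OF symp_rtranclp[OF symp_edge_rel] vu])
  ultimately show ?thesis unfolding comp_verts_def by (auto intro: rtranclp_trans)
qed

lemma comp_edges_eq: "u \<in> comp_verts F v \<Longrightarrow> comp_edges F u = comp_edges F v"
  unfolding comp_edges_def using comp_verts_eq by metis

lemma edge_in_comp_edges:
  assumes "{x, y} \<in> F" and "v \<in> {x, y}"
  shows "{x, y} \<in> comp_edges F v"
proof -
  have "{y, x} \<in> F" using assms(1) by (simp add: insert_commute)
  then have "x \<in> comp_verts F v \<and> y \<in> comp_verts F v"
    using assms comp_verts_self[of v F] comp_verts_step[OF comp_verts_self] by auto
  then show ?thesis using assms(1) unfolding comp_edges_def by auto
qed

lemma isolated_edge_component:
  assumes ab: "{a, b} \<in> F" and nonempty: "{} \<notin> F"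
    and only: "\<And>e. e \<in> F \<Longrightarrow> a \<in> e \<or> b \<in> e \<Longrightarrow> e = {a, b}"
  shows "comp_verts F a = {a, b}" "comp_edges F a = {{a, b}}"
proof -
  show verts: "comp_verts F a = {a, b}"
  proof
    show "comp_verts F a \<subseteq> {a, b}"
    proof (rule comp_verts_subset_closed)
      fix u c assume "u \<in> {a, b}" "{u, c} \<in> F"
      then have "{u, c} = {a, b}" using only by blast
      then show "c \<in> {a, b}" by blast
    qed simp
    show "{a, b} \<subseteq> comp_verts F a"
      using comp_verts_self comp_verts_step[OF comp_verts_self ab] by auto
  qed
  show "comp_edges F a = {{a, b}}"
  proof
    show "comp_edges F a \<subseteq> {{a, b}}"
    proof
      fix e assume "e \<in> comp_edges F a"
      then have e: "e \<in> F" "e \<subseteq> {a, b}" using verts by (auto simp: comp_edges_def)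
      obtain x where "x \<in> e" using e(1) nonempty by (metis equals0I)
      then have "a \<in> e \<or> b \<in> e" using e(2) by blast
      then show "e \<in> {{a, b}}" using only e(1) by blast
    qed
    show "{{a, b}} \<subseteq> comp_edges F a" using ab verts by (auto simp: comp_edges_def)
  qed
qed

lemma sym_diff_left_cancel: "sym_diff A B = sym_diff A C \<longleftrightarrow> B = C"
  by (auto simp: set_eq_iff)

lemma perfect_matching_cover:
  "perfect_matching V E M \<Longrightarrow> v \<in> V \<Longrightarrow> \<exists>e\<in>M. v \<in> e"
  unfolding perfect_matching_def by blast

lemma perfect_matching_unique:
  "perfect_matching V E M \<Longrightarrow> v \<in> V \<Longrightarrow> e \<in> M \<Longrightarrow> v \<in> e \<Longrightarrow> e' \<in> M \<Longrightarrow> v \<in> e' \<Longrightarrow> e = e'"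
  unfolding perfect_matching_def by blast

lemma perfect_matching_degree_two:
  assumes "perfect_matching V E M" "v \<in> V" "e1 \<noteq> e2" "v \<in> e1" "v \<in> e2"
    and "\<And>e. e \<in> E \<Longrightarrow> v \<in> e \<Longrightarrow> e = e1 \<or> e = e2"
  shows "(e1 \<in> M) \<noteq> (e2 \<in> M)"
proof -
  obtain e where e: "e \<in> M" "v \<in> e" and unique: "\<And>e'. e' \<in> M \<Longrightarrow> v \<in> e' \<Longrightarrow> e' = e"
    using assms(1,2) unfolding perfect_matching_def by metis
  have "e \<in> E" using e(1) assms(1) by (auto simp: perfect_matching_def)
  then have "e = e1 \<or> e = e2" using assms(6) e(2) by blast
  then show ?thesis using e unique assms(3-5) by blast
qed

lemma alternating_subset_of_six:
  assumes "N \<subseteq> {x1, x2, x3, x4, x5, x6}"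
    and "(x1 \<in> N) \<noteq> (x2 \<in> N)" "(x2 \<in> N) \<noteq> (x3 \<in> N)" "(x3 \<in> N) \<noteq> (x4 \<in> N)"
    and "(x4 \<in> N) \<noteq> (x5 \<in> N)" "(x5 \<in> N) \<noteq> (x6 \<in> N)"
  shows "N = {x1, x3, x5} \<or> N = {x2, x4, x6}"
proof (cases "x1 \<in> N")
  case True
  have "N = {x1, x3, x5}"
    using assms True by (intro equalityI subsetI; simp only: insert_iff empty_iff; blast)
  then show ?thesis ..
next
  case False
  have "N = {x2, x4, x6}"
    using assms False by (intro equalityI subsetI; simp only: insert_iff empty_iff; blast)
  then show ?thesis ..
qed

definition is_hexagon :: "'a set set \<Rightarrow> bool" where
  "is_hexagon h \<longleftrightarrow> (\<exists>a b c d e f. distinct [a, b, c, d, e, f] \<and>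
      h = {{a, b}, {b, c}, {c, d}, {d, e}, {e, f}, {f, a}})"

lemma is_hexagonE:
  assumes "is_hexagon h"
  obtains a b c d e f where "distinct [a, b, c, d, e, f]"
    and "h = {{a, b}, {b, c}, {c, d}, {d, e}, {e, f}, {f, a}}"
  using assms unfolding is_hexagon_def by blast

lemma finite_hexagon: "is_hexagon h \<Longrightarrow> finite h"
  by (auto elim: is_hexagonE)

lemma card_hexagon: "is_hexagon h \<Longrightarrow> card h = 6"
  by (elim is_hexagonE) (auto simp: doubleton_eq_iff card_insert_if)

lemma hexagon_edge_doubleton: "is_hexagon h \<Longrightarrow> e \<in> h \<Longrightarrow> \<exists>x y. x \<noteq> y \<and> e = {x, y}"
  by (elim is_hexagonE) auto

lemma hexagon_nonempty: "is_hexagon h \<Longrightarrow> \<exists>v. v \<in> \<Union>h"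
  by (elim is_hexagonE) auto

lemma hexagon_degree_two:
  assumes "is_hexagon h" "v \<in> \<Union>h"
  obtains e1 e2 where "e1 \<noteq> e2" "e1 \<in> h" "e2 \<in> h" "v \<in> e1" "v \<in> e2"
    and "\<And>e. e \<in> h \<Longrightarrow> v \<in> e \<Longrightarrow> e = e1 \<or> e = e2"
proof -
  obtain a b c d e f where dist: "distinct [a, b, c, d, e, f]"
    and h: "h = {{a, b}, {b, c}, {c, d}, {d, e}, {e, f}, {f, a}}"
    using assms(1) by (rule is_hexagonE)
  have "v = a \<or> v = b \<or> v = c \<or> v = d \<or> v = e \<or> v = f" using assms(2) h by auto
  then show ?thesis
  proof (elim disjE)
    assume "v = a"
    then show ?thesis using dist h by (intro that[of "{a, b}" "{f, a}"]) (auto simp: doubleton_eq_iff)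
  next
    assume "v = b"
    then show ?thesis using dist h by (intro that[of "{a, b}" "{b, c}"]) (auto simp: doubleton_eq_iff)
  next
    assume "v = c"
    then show ?thesis using dist h by (intro that[of "{b, c}" "{c, d}"]) (auto simp: doubleton_eq_iff)
  next
    assume "v = d"
    then show ?thesis using dist h by (intro that[of "{c, d}" "{d, e}"]) (auto simp: doubleton_eq_iff)
  next
    assume "v = e"
    then show ?thesis using dist h by (intro that[of "{d, e}" "{e, f}"]) (auto simp: doubleton_eq_iff)
  next
    assume "v = f"
    then show ?thesis using dist h by (intro that[of "{e, f}" "{f, a}"]) (auto simp: doubleton_eq_iff)
  qed
qed

lemma hexagon_other_edge:
  assumes "is_hexagon h" "e \<in> h" "v \<in> e"
  obtains e' where "e' \<in> h" "v \<in> e'" "e' \<noteq> e" and "\<And>x. x \<in> h \<Longrightarrow> v \<in> x \<Longrightarrow> x = e \<or> x = e'"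
proof -
  obtain e1 e2 where "e1 \<noteq> e2" "e1 \<in> h" "e2 \<in> h" "v \<in> e1" "v \<in> e2"
    and at_v: "\<And>x. x \<in> h \<Longrightarrow> v \<in> x \<Longrightarrow> x = e1 \<or> x = e2"
    using assms by (elim hexagon_degree_two) blast+
  moreover have "e = e1 \<or> e = e2" using at_v assms(2,3) .
  ultimately show ?thesis using that by blast
qed

lemma hexagon_subset_comp_verts:
  assumes "is_hexagon h" "h \<subseteq> F" "v \<in> \<Union>h"
  shows "\<Union>h \<subseteq> comp_verts F v"
proof -
  obtain a b c d e f where h: "h = {{a, b}, {b, c}, {c, d}, {d, e}, {e, f}, {f, a}}"
    using assms(1) by (rule is_hexagonE)
  have "{a, b} \<in> F" "{b, c} \<in> F" "{c, d} \<in> F" "{d, e} \<in> F" "{e, f} \<in> F"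
    using assms(2) h by auto
  then have "\<Union>h \<subseteq> comp_verts F a"
    using h comp_verts_self[of a F] comp_verts_step[of _ F a] by blast
  moreover have "comp_verts F v = comp_verts F a"
    using calculation assms(3) by (rule comp_verts_eq[OF subsetD])
  ultimately show ?thesis by simp
qed

lemma hexagon_perfect_matching_ex: "is_hexagon h \<Longrightarrow> \<exists>N. perfect_matching (\<Union>h) h N"
proof (elim is_hexagonE)
  fix a b c d e f
  assume "distinct [a, b, c, d, e, f]" "h = {{a, b}, {b, c}, {c, d}, {d, e}, {e, f}, {f, a}}"
  then have "perfect_matching (\<Union>h) h {{a, b}, {c, d}, {e, f}}"
    unfolding perfect_matching_def by (auto simp: doubleton_eq_iff)
  then show ?thesis by blast
qed

lemma hexagon_perfect_matchings:
  assumes "is_hexagon h" "perfect_matching (\<Union>h) h N1" "perfect_matching (\<Union>h) h N2"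
  shows "N1 = N2 \<or> N1 = h - N2"
proof -
  obtain a b c d e f where dist: "distinct [a, b, c, d, e, f]"
    and h: "h = {{a, b}, {b, c}, {c, d}, {d, e}, {e, f}, {f, a}}"
    using assms(1) by (rule is_hexagonE)
  have one_of_two: "N = {{a, b}, {c, d}, {e, f}} \<or> N = {{b, c}, {d, e}, {f, a}}"
    if N: "perfect_matching (\<Union>h) h N" for N
  proof -
    note deg = perfect_matching_degree_two[OF N]
    have "({a, b} \<in> N) \<noteq> ({b, c} \<in> N)"
      by (rule deg[of b]) (use h dist in \<open>auto simp: doubleton_eq_iff\<close>)
    moreover have "({b, c} \<in> N) \<noteq> ({c, d} \<in> N)"
      by (rule deg[of c]) (use h dist in \<open>auto simp: doubleton_eq_iff\<close>)
    moreover have "({c, d} \<in> N) \<noteq> ({d, e} \<in> N)"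
      by (rule deg[of d]) (use h dist in \<open>auto simp: doubleton_eq_iff\<close>)
    moreover have "({d, e} \<in> N) \<noteq> ({e, f} \<in> N)"
      by (rule deg[of e]) (use h dist in \<open>auto simp: doubleton_eq_iff\<close>)
    moreover have "({e, f} \<in> N) \<noteq> ({f, a} \<in> N)"
      by (rule deg[of f]) (use h dist in \<open>auto simp: doubleton_eq_iff\<close>)
    ultimately show ?thesis
      using N unfolding h perfect_matching_def by (intro alternating_subset_of_six) auto
  qed
  have "h - {{a, b}, {c, d}, {e, f}} = {{b, c}, {d, e}, {f, a}}"
    "h - {{b, c}, {d, e}, {f, a}} = {{a, b}, {c, d}, {e, f}}"
    unfolding h using dist by (auto simp: doubleton_eq_iff)
  with one_of_two[OF assms(2)] one_of_two[OF assms(3)] show ?thesis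
    by (elim disjE) simp_all
qed

section \<open>Graphs with distinguished hexagons and their resonance graphs\<close>

locale hexagon_graph =
  fixes V :: "'a set" and E :: "'a set set" and Hx :: "'a set set set"
  assumes edge_doubleton: "\<And>e. e \<in> E \<Longrightarrow> \<exists>x y. x \<noteq> y \<and> e = {x, y}"
    and edge_subset_verts: "\<And>e. e \<in> E \<Longrightarrow> e \<subseteq> V"
    and is_hexagon_hexagons: "\<And>h. h \<in> Hx \<Longrightarrow> is_hexagon h"
    and hexagon_subset_edges: "\<And>h. h \<in> Hx \<Longrightarrow> h \<subseteq> E"
    and card_Int_hexagons_le_1:
      "\<And>h h'. h \<in> Hx \<Longrightarrow> h' \<in> Hx \<Longrightarrow> h \<noteq> h' \<Longrightarrow> card (h \<inter> h') \<le> 1"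
    and finite_hexagons: "finite Hx"
begin

lemma hexagon_vertex: "h \<in> Hx \<Longrightarrow> v \<in> \<Union>h \<Longrightarrow> v \<in> V"
  using hexagon_subset_edges edge_subset_verts by blast

lemma edge_nonempty: "e \<in> E \<Longrightarrow> \<exists>v. v \<in> e"
  using edge_doubleton by blast

lemma perfect_matching_subset: "perfect_matching V E M \<Longrightarrow> M \<subseteq> E"
  by (simp add: perfect_matching_def)

lemma alternating_hexagon_edge:
  assumes M: "perfect_matching V E M" and M': "perfect_matching V E (sym_diff M h)"
    and h: "h \<in> Hx" and v: "v \<in> \<Union>h" and e: "e \<in> M" "v \<in> e"
  shows "e \<in> h"
proof (rule ccontr)
  assume e_out: "e \<notin> h"
  have vV: "v \<in> V" using hexagon_vertex h v .
  obtain e1 e2 where "e1 \<noteq> e2" "e1 \<in> h" "e2 \<in> h" "v \<in> e1" "v \<in> e2"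
    using hexagon_degree_two[OF is_hexagon_hexagons[OF h] v] by metis
  then obtain e' where e': "e' \<in> h" "v \<in> e'" "e' \<notin> M"
    using perfect_matching_unique[OF M vV e] by metis
  then have "e' \<in> sym_diff M h" "e \<in> sym_diff M h" using e e_out by blast+
  then have "e' = e" using perfect_matching_unique[OF M' vV] e'(2) e(2) by blast
  then show False using e'(1) e_out by simp
qed

text \<open>In a 4-cycle of the resonance graph opposite edges carry the same hexagon:
  \<open>a \<triangle> c = b \<triangle> d\<close> for the four hexagons, and the hexagon \<open>b\<close>, which shares at most one
  edge with each of \<open>a\<close>, \<open>c\<close> and \<open>d\<close>, cannot differ from \<open>c\<close>.\<close>

lemma resonance_square:
  assumes "sym_diff M M1 \<in> Hx" "sym_diff M M2 \<in> Hx" "sym_diff M1 M3 \<in> Hx" "sym_diff M2 M3 \<in> Hx"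
    and "M1 \<noteq> M2" "M \<noteq> M3"
  shows "sym_diff M2 M3 = sym_diff M M1"
proof -
  define a b c d where "a = sym_diff M M1" "b = sym_diff M M2" "c = sym_diff M1 M3"
    "d = sym_diff M2 M3"
  have hex: "a \<in> Hx" "b \<in> Hx" "c \<in> Hx" "d \<in> Hx" using assms(1-4) a_b_c_d_def by simp_all
  have cycle: "sym_diff a c = sym_diff b d" unfolding a_b_c_d_def by (auto simp: set_eq_iff)
  have "b \<noteq> a" using assms(5) sym_diff_left_cancel[of M M2 M1] unfolding a_b_c_d_def by blast
  have "b \<noteq> d" using assms(6) sym_diff_left_cancel[of M2 M M3] unfolding a_b_c_d_def
    by (metis Un_commute)
  have "b = c"
  proof (rule ccontr)
    assume "b \<noteq> c"
    have fin: "finite a" "finite b" "finite c" "finite d"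
      using hex finite_hexagon is_hexagon_hexagons by blast+
    have "b - d \<subseteq> (b \<inter> a) \<union> (b \<inter> c)"
    proof
      fix x assume x: "x \<in> b - d"
      then have "x \<in> sym_diff a c" unfolding cycle by blast
      with x show "x \<in> (b \<inter> a) \<union> (b \<inter> c)" by blast
    qed
    then have "card (b - d) \<le> card ((b \<inter> a) \<union> (b \<inter> c))"
      using fin by (intro card_mono) auto
    also have "\<dots> \<le> card (b \<inter> a) + card (b \<inter> c)" by (rule card_Un_le)
    also have "\<dots> \<le> 2"
      using card_Int_hexagons_le_1[of b a] card_Int_hexagons_le_1[of b c] hex
        \<open>b \<noteq> a\<close> \<open>b \<noteq> c\<close> by simp
    finally have "card (b - d) \<le> 2" .
    moreover have "card (b - d) = card b - card (b \<inter> d)"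
      using fin by (simp add: card_Diff_subset_Int)
    moreover have "card b = 6" "card (b \<inter> d) \<le> 1"
      using card_hexagon is_hexagon_hexagons card_Int_hexagons_le_1 hex \<open>b \<noteq> d\<close> by auto
    ultimately show False by simp
  qed
  then have "d = a" using cycle by (auto simp: set_eq_iff)
  then show ?thesis unfolding a_b_c_d_def .
qed

text \<open>A common vertex of \<open>h1\<close> and \<open>h2\<close> would force two common edges.\<close>

lemma resonant_hexagons_disjoint:
  assumes M: "perfect_matching V E M" and M1: "perfect_matching V E (sym_diff M h1)"
    and M2: "perfect_matching V E (sym_diff M h2)"
    and M12: "perfect_matching V E (sym_diff (sym_diff M h1) h2)"
    and h: "h1 \<in> Hx" "h2 \<in> Hx" "h1 \<noteq> h2"
  shows "\<Union>h1 \<inter> \<Union>h2 = {}"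
proof (rule ccontr)
  assume "\<Union>h1 \<inter> \<Union>h2 \<noteq> {}"
  then obtain v where v: "v \<in> \<Union>h1" "v \<in> \<Union>h2" by blast
  have vV: "v \<in> V" using hexagon_vertex h(1) v(1) by blast
  obtain e where e: "e \<in> M" "v \<in> e" using perfect_matching_cover[OF M vV] by blast
  have e1: "e \<in> h1" using alternating_hexagon_edge[OF M M1 h(1) v(1) e] .
  have e2: "e \<in> h2" using alternating_hexagon_edge[OF M M2 h(2) v(2) e] .
  obtain u where u: "u \<in> e" "u \<noteq> v"
    using hexagon_edge_doubleton[OF is_hexagon_hexagons[OF h(1)] e1] e(2) by blast
  have uV: "u \<in> V" using hexagon_vertex h(1) e1 u(1) by blast
  obtain f where f: "f \<in> sym_diff M h1" "u \<in> f" using perfect_matching_cover[OF M1 uV] by blast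
  have "f \<noteq> e" using f(1) e(1) e1 by blast
  have "f \<in> h1"
  proof (rule ccontr)
    assume "f \<notin> h1"
    then have "f \<in> M" using f(1) by blast
    then show False using perfect_matching_unique[OF M uV _ f(2) e(1) u(1)] \<open>f \<noteq> e\<close> by blast
  qed
  have "f \<in> h2" using alternating_hexagon_edge[OF M1 M12 h(2) _ f] u(1) e2 by blast
  have "card {e, f} \<le> card (h1 \<inter> h2)"
    using e1 e2 \<open>f \<in> h1\<close> \<open>f \<in> h2\<close> finite_hexagon[OF is_hexagon_hexagons[OF h(1)]] by (intro card_mono) auto
  then show False using card_Int_hexagons_le_1[OF h] \<open>f \<noteq> e\<close> by simp
qed

end

section \<open>Resonant families of hexagons\<close>

definition hexagon_twist :: "'a set set \<Rightarrow> (nat \<Rightarrow> 'a set set) \<Rightarrow> nat set \<Rightarrow> 'a set set" where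
  "hexagon_twist M hs A = sym_diff M (\<Union>(hs ` A))"

definition resonant_cover :: "'a set set \<Rightarrow> (nat \<Rightarrow> 'a set set) \<Rightarrow> nat \<Rightarrow> 'a set set" where
  "resonant_cover M hs k = M \<union> \<Union>(hs ` {..<k})"

definition perfect_matchings_within :: "'a set \<Rightarrow> 'a set set \<Rightarrow> 'a set set \<Rightarrow> 'a set set set" where
  "perfect_matchings_within V E F = {M. perfect_matching V E M \<and> M \<subseteq> F}"

definition induced_cubes :: "'v set \<Rightarrow> ('v \<Rightarrow> 'v \<Rightarrow> bool) \<Rightarrow> nat \<Rightarrow> 'v set set" where
  "induced_cubes VG adj i = {S. S \<subseteq> VG \<and>
      (\<exists>f. bij_betw f (Pow {..<i}) S \<and>
           (\<forall>A\<in>Pow {..<i}. \<forall>B\<in>Pow {..<i}. cube_adj A B \<longleftrightarrow> adj (f A) (f B)))}"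

lemma cube_count_eq_card_induced_cubes: "cube_count VG adj i = card (induced_cubes VG adj i)"
  by (simp add: cube_count_def induced_cubes_def)

locale resonant_family = hexagon_graph +
  fixes M0 :: "'a set set" and hs :: "nat \<Rightarrow> 'a set set" and k :: nat
  assumes base_perfect_matching: "perfect_matching V E M0"
    and family_hexagon: "\<And>j. j < k \<Longrightarrow> hs j \<in> Hx"
    and family_disjoint: "\<And>j l. j < k \<Longrightarrow> l < k \<Longrightarrow> j \<noteq> l \<Longrightarrow> \<Union>(hs j) \<inter> \<Union>(hs l) = {}"
    and family_alternating:
      "\<And>j e v. j < k \<Longrightarrow> e \<in> M0 \<Longrightarrow> v \<in> \<Union>(hs j) \<Longrightarrow> v \<in> e \<Longrightarrow> e \<in> hs j"
begin

abbreviation "twist \<equiv> hexagon_twist M0 hs"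
abbreviation "cover \<equiv> resonant_cover M0 hs k"

lemma family_index_unique:
  assumes "j < k" "l < k" "x \<in> hs j" "x \<in> hs l"
  shows "j = l"
proof (rule ccontr)
  assume "j \<noteq> l"
  obtain v where "v \<in> x"
    using edge_nonempty hexagon_subset_edges family_hexagon assms(1,3) by blast
  then show False using family_disjoint[OF assms(1,2) \<open>j \<noteq> l\<close>] assms(3,4) by blast
qed

lemma family_edges_disjoint: "j < k \<Longrightarrow> l < k \<Longrightarrow> j \<noteq> l \<Longrightarrow> hs j \<inter> hs l = {}"
  using family_index_unique by blast

lemma resonant_cover_subset_edges: "cover \<subseteq> E"
  using perfect_matching_subset[OF base_perfect_matching] hexagon_subset_edges family_hexagon
  by (auto simp: resonant_cover_def)

lemma base_subset_cover: "M0 \<subseteq> cover"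
  by (simp add: resonant_cover_def)

lemma cover_edge_at_family_vertex:
  assumes "e \<in> cover" "v \<in> e" "v \<in> \<Union>(hs j)" "j < k"
  shows "e \<in> hs j"
proof -
  have "e \<in> M0 \<or> (\<exists>l<k. e \<in> hs l)" using assms(1) by (auto simp: resonant_cover_def)
  then show ?thesis
  proof
    assume "e \<in> M0" then show ?thesis using family_alternating assms by blast
  next
    assume "\<exists>l<k. e \<in> hs l"
    then obtain l where l: "l < k" "e \<in> hs l" by blast
    then have "l = j" using family_disjoint[OF l(1) assms(4)] assms(2,3) by blast
    then show ?thesis using l by simp
  qed
qed

lemma mem_twist:
  assumes "j < k" "x \<in> hs j" "A \<subseteq> {..<k}"
  shows "x \<in> twist A \<longleftrightarrow> (x \<in> M0) \<noteq> (j \<in> A)"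
proof -
  have "x \<in> \<Union>(hs ` A) \<longleftrightarrow> j \<in> A" using assms family_index_unique by blast
  then show ?thesis unfolding hexagon_twist_def by auto
qed

lemma mem_twist_outside:
  assumes "A \<subseteq> {..<k}" "\<forall>j<k. x \<notin> hs j"
  shows "x \<in> twist A \<longleftrightarrow> x \<in> M0"
  using assms unfolding hexagon_twist_def by auto

lemma twist_subset_cover: "A \<subseteq> {..<k} \<Longrightarrow> twist A \<subseteq> cover"
  unfolding hexagon_twist_def resonant_cover_def by blast

lemma twist_unique_edge_at_family_vertex:
  assumes A: "A \<subseteq> {..<k}" and j: "j < k" "v \<in> \<Union>(hs j)"
  shows "\<exists>!e. e \<in> twist A \<and> v \<in> e"
proof -
  have vV: "v \<in> V" using hexagon_vertex[OF family_hexagon[OF j(1)] j(2)] .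
  obtain e0 where e0: "e0 \<in> M0" "v \<in> e0"
    using perfect_matching_cover[OF base_perfect_matching vV] by blast
  have e0j: "e0 \<in> hs j" using family_alternating[OF j(1) e0(1) j(2) e0(2)] .
  obtain e' where e': "e' \<in> hs j" "v \<in> e'" "e' \<noteq> e0"
    and at_v: "\<And>x. x \<in> hs j \<Longrightarrow> v \<in> x \<Longrightarrow> x = e0 \<or> x = e'"
    using hexagon_other_edge[OF is_hexagon_hexagons[OF family_hexagon[OF j(1)]] e0j e0(2)] by blast
  have "e' \<notin> M0"
    using perfect_matching_unique[OF base_perfect_matching vV e0] e'(2,3) by blast
  have twist_at_v: "x = e0 \<or> x = e'" if "x \<in> twist A" "v \<in> x" for x
  proof -
    have "x \<in> cover" using that(1) twist_subset_cover[OF A] by blast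
    then show ?thesis using at_v cover_edge_at_family_vertex[OF _ that(2) j(2,1)] that(2) by blast
  qed
  show ?thesis
  proof (cases "j \<in> A")
    case True
    then have "e' \<in> twist A" "e0 \<notin> twist A"
      using mem_twist[OF j(1) e'(1) A] mem_twist[OF j(1) e0j A] \<open>e' \<notin> M0\<close> e0(1) by simp_all
    then show ?thesis using twist_at_v e'(2) by blast
  next
    case False
    then have "e' \<notin> twist A" "e0 \<in> twist A"
      using mem_twist[OF j(1) e'(1) A] mem_twist[OF j(1) e0j A] \<open>e' \<notin> M0\<close> e0(1) by simp_all
    then show ?thesis using twist_at_v e0(2) by blast
  qed
qed

lemma twist_perfect_matching:
  assumes A: "A \<subseteq> {..<k}"
  shows "perfect_matching V E (twist A)"
  unfolding perfect_matching_def
proof (intro conjI ballI)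
  show "twist A \<subseteq> E" using twist_subset_cover[OF A] resonant_cover_subset_edges by blast
  fix v assume vV: "v \<in> V"
  show "\<exists>!e. e \<in> twist A \<and> v \<in> e"
  proof (cases "\<exists>j<k. v \<in> \<Union>(hs j)")
    case True
    then show ?thesis using twist_unique_edge_at_family_vertex[OF A] by blast
  next
    case False
    then have twist_at_v: "x \<in> twist A \<longleftrightarrow> x \<in> M0" if "v \<in> x" for x
      using mem_twist_outside[OF A] that by blast
    obtain e0 where e0: "e0 \<in> M0" "v \<in> e0"
      using perfect_matching_cover[OF base_perfect_matching vV] by blast
    show ?thesis
    proof (rule ex1I)
      show "e0 \<in> twist A \<and> v \<in> e0" using twist_at_v e0 by blast
      show "x = e0" if "x \<in> twist A \<and> v \<in> x" for x
        using that twist_at_v perfect_matching_unique[OF base_perfect_matching vV _ _ e0] by blast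
    qed
  qed
qed

lemma sym_diff_twist:
  assumes "A \<subseteq> {..<k}" "B \<subseteq> {..<k}"
  shows "sym_diff (twist A) (twist B) = \<Union>(hs ` sym_diff A B)"
proof (rule set_eqI)
  fix x
  have D: "sym_diff A B \<subseteq> {..<k}" using assms by blast
  show "x \<in> sym_diff (twist A) (twist B) \<longleftrightarrow> x \<in> \<Union>(hs ` sym_diff A B)"
  proof (cases "\<exists>j<k. x \<in> hs j")
    case True
    then obtain j where j: "j < k" "x \<in> hs j" by blast
    have "x \<in> \<Union>(hs ` sym_diff A B) \<longleftrightarrow> j \<in> sym_diff A B"
      using j D family_index_unique by blast
    then show ?thesis using mem_twist[OF j assms(1)] mem_twist[OF j assms(2)] by auto
  next
    case False
    then show ?thesis using mem_twist_outside[OF assms(1)] mem_twist_outside[OF assms(2)] D by auto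
  qed
qed

lemma twist_adjacent_iff:
  assumes "A \<subseteq> {..<k}" "B \<subseteq> {..<k}"
  shows "sym_diff (twist A) (twist B) \<in> Hx \<longleftrightarrow> card (sym_diff A B) = 1"
proof -
  define D where "D = sym_diff A B"
  have D: "D \<subseteq> {..<k}" using assms by (auto simp: D_def)
  have "\<Union>(hs ` D) \<in> Hx \<longleftrightarrow> card D = 1"
  proof
    assume "card D = 1"
    then obtain j where "D = {j}" by (rule card_1_singletonE)
    then show "\<Union>(hs ` D) \<in> Hx" using D family_hexagon by simp
  next
    assume U: "\<Union>(hs ` D) \<in> Hx"
    show "card D = 1"
    proof (rule ccontr)
      assume "card D \<noteq> 1"
      moreover have "D \<noteq> {}" using U card_hexagon[OF is_hexagon_hexagons[OF U]] by auto
      ultimately obtain j l where jl: "j \<in> D" "l \<in> D" "j \<noteq> l"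
        by (metis is_singletonI' is_singleton_altdef)
      then have "j < k" "l < k" using D by auto
      then have "card (hs j) = 6" "card (hs l) = 6" "finite (hs j)" "finite (hs l)"
        using card_hexagon finite_hexagon is_hexagon_hexagons family_hexagon by blast+
      moreover have "hs j \<inter> hs l = {}" using family_edges_disjoint \<open>j < k\<close> \<open>l < k\<close> jl(3) .
      ultimately have "card (hs j \<union> hs l) = 12" by (simp add: card_Un_disjoint)
      moreover have "card (hs j \<union> hs l) \<le> card (\<Union>(hs ` D))"
        using jl finite_hexagon[OF is_hexagon_hexagons[OF U]] by (intro card_mono) auto
      ultimately show False using card_hexagon[OF is_hexagon_hexagons[OF U]] by simp
    qed
  qed
  then show ?thesis using sym_diff_twist[OF assms] by (simp add: D_def)
qed

lemma inj_on_twist: "inj_on twist (Pow {..<k})"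
proof (rule inj_onI)
  fix A B assume A: "A \<in> Pow {..<k}" and B: "B \<in> Pow {..<k}" and "twist A = twist B"
  then have empty: "\<Union>(hs ` sym_diff A B) = {}" using sym_diff_twist[of A B] by simp
  have "sym_diff A B = {}"
  proof (rule ccontr)
    assume "sym_diff A B \<noteq> {}"
    then obtain j where j: "j \<in> sym_diff A B" by blast
    then have "j < k" using A B by blast
    then obtain v where "v \<in> \<Union>(hs j)"
      using hexagon_nonempty is_hexagon_hexagons family_hexagon by blast
    then show False using empty j by blast
  qed
  then show "A = B" by blast
qed

lemma perfect_matching_hexagon_restrict:
  assumes "j < k" "perfect_matching V E N" "N \<subseteq> cover"
  shows "perfect_matching (\<Union>(hs j)) (hs j) (N \<inter> hs j)"
  unfolding perfect_matching_def
proof (intro conjI ballI)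
  show "N \<inter> hs j \<subseteq> hs j" by blast
  fix v assume v: "v \<in> \<Union>(hs j)"
  have vV: "v \<in> V" using hexagon_vertex[OF family_hexagon[OF assms(1)] v] .
  obtain e where e: "e \<in> N" "v \<in> e" using perfect_matching_cover[OF assms(2) vV] by blast
  have "e \<in> hs j" using cover_edge_at_family_vertex[of e v j] e assms(1,3) v by blast
  then show "\<exists>!e. e \<in> N \<inter> hs j \<and> v \<in> e" using e perfect_matching_unique[OF assms(2) vV] by blast
qed

lemma perfect_matching_in_cover_outside_family:
  assumes M: "perfect_matching V E M" "M \<subseteq> cover" and x_out: "\<forall>j<k. x \<notin> hs j"
  shows "x \<in> M \<longleftrightarrow> x \<in> M0"
proof
  assume "x \<in> M"
  then show "x \<in> M0" using M(2) x_out by (auto simp: resonant_cover_def)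
next
  assume x0: "x \<in> M0"
  then obtain y where y: "y \<in> x"
    using edge_nonempty perfect_matching_subset[OF base_perfect_matching] by blast
  have yV: "y \<in> V" using edge_subset_verts perfect_matching_subset[OF base_perfect_matching] x0 y
    by blast
  have y_out: "\<forall>j<k. y \<notin> \<Union>(hs j)" using family_alternating x0 y x_out by blast
  obtain e where e: "e \<in> M" "y \<in> e" using perfect_matching_cover[OF M(1) yV] by blast
  have "e \<in> M0" using e M(2) y_out by (auto simp: resonant_cover_def)
  then have "e = x" using perfect_matching_unique[OF base_perfect_matching yV] e(2) x0 y by blast
  then show "x \<in> M" using e by simp
qed

lemma perfect_matchings_within_cover: "perfect_matchings_within V E cover = twist ` Pow {..<k}"
proof
  show "twist ` Pow {..<k} \<subseteq> perfect_matchings_within V E cover"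
    using twist_perfect_matching twist_subset_cover by (auto simp: perfect_matchings_within_def)
next
  show "perfect_matchings_within V E cover \<subseteq> twist ` Pow {..<k}"
  proof
    fix M assume "M \<in> perfect_matchings_within V E cover"
    then have M: "perfect_matching V E M" "M \<subseteq> cover" by (auto simp: perfect_matchings_within_def)
    define A where "A = {j. j < k \<and> M \<inter> hs j \<noteq> M0 \<inter> hs j}"
    have A: "A \<subseteq> {..<k}" by (auto simp: A_def)
    have "x \<in> M \<longleftrightarrow> x \<in> twist A" for x
    proof (cases "\<exists>j<k. x \<in> hs j")
      case True
      then obtain j where j: "j < k" "x \<in> hs j" by blast
      have "M \<inter> hs j = M0 \<inter> hs j \<or> M \<inter> hs j = hs j - M0 \<inter> hs j"
        using hexagon_perfect_matchings[OF is_hexagon_hexagons[OF family_hexagon[OF j(1)]]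
            perfect_matching_hexagon_restrict[OF j(1) M]
            perfect_matching_hexagon_restrict[OF j(1) base_perfect_matching base_subset_cover]] .
      then have "x \<in> M \<longleftrightarrow> (x \<in> M0) \<noteq> (j \<in> A)" using j by (auto simp: A_def)
      then show ?thesis using mem_twist[OF j A] by simp
    next
      case False
      then show ?thesis
        using perfect_matching_in_cover_outside_family[OF M] mem_twist_outside[OF A] by blast
    qed
    then have "M = twist A" by blast
    then show "M \<in> twist ` Pow {..<k}" using A by blast
  qed
qed

lemma Union_perfect_matchings_within_cover: "\<Union>(perfect_matchings_within V E cover) = cover"
proof
  show "\<Union>(perfect_matchings_within V E cover) \<subseteq> cover"
    by (auto simp: perfect_matchings_within_def)
next
  show "cover \<subseteq> \<Union>(perfect_matchings_within V E cover)"
  proof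
    fix x assume x: "x \<in> cover"
    have "\<exists>A\<in>Pow {..<k}. x \<in> twist A"
    proof (cases "x \<in> M0")
      case True
      then have "x \<in> twist {}" by (simp add: hexagon_twist_def)
      then show ?thesis by blast
    next
      case False
      then obtain j where j: "j < k" "x \<in> hs j" using x by (auto simp: resonant_cover_def)
      then have "x \<in> twist {j}" using mem_twist[OF j] False by simp
      then show ?thesis using j(1) by blast
    qed
    then show "x \<in> \<Union>(perfect_matchings_within V E cover)"
      unfolding perfect_matchings_within_cover by blast
  qed
qed

lemma family_hexagon_component:
  assumes j: "j < k" and v: "v \<in> \<Union>(hs j)"
  shows "comp_verts cover v = \<Union>(hs j)" "comp_edges cover v = hs j"
proof -
  have hj: "hs j \<subseteq> cover" using j by (auto simp: resonant_cover_def)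
  show verts: "comp_verts cover v = \<Union>(hs j)"
  proof
    show "comp_verts cover v \<subseteq> \<Union>(hs j)"
    proof (rule comp_verts_subset_closed[OF v])
      fix a c assume "a \<in> \<Union>(hs j)" "{a, c} \<in> cover"
      then have "{a, c} \<in> hs j" using cover_edge_at_family_vertex[of "{a, c}" a j] j by blast
      then show "c \<in> \<Union>(hs j)" by blast
    qed
    show "\<Union>(hs j) \<subseteq> comp_verts cover v"
      using hexagon_subset_comp_verts[OF is_hexagon_hexagons[OF family_hexagon[OF j]] hj v] .
  qed
  show "comp_edges cover v = hs j"
  proof
    show "comp_edges cover v \<subseteq> hs j"
    proof
      fix e assume "e \<in> comp_edges cover v"
      then have e: "e \<in> cover" "e \<subseteq> \<Union>(hs j)" using verts by (auto simp: comp_edges_def)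
      obtain y where "y \<in> e" using edge_nonempty resonant_cover_subset_edges e(1) by blast
      then show "e \<in> hs j" using cover_edge_at_family_vertex[of e y j] e j by blast
    qed
    show "hs j \<subseteq> comp_edges cover v" using hj verts by (auto simp: comp_edges_def)
  qed
qed

lemma matching_edge_component:
  assumes vV: "v \<in> V" and v_out: "\<forall>j<k. v \<notin> \<Union>(hs j)"
  shows "\<exists>b. b \<noteq> v \<and> comp_verts cover v = {v, b} \<and> comp_edges cover v = {{v, b}}"
proof -
  obtain e0 where e0: "e0 \<in> M0" "v \<in> e0"
    using perfect_matching_cover[OF base_perfect_matching vV] by blast
  obtain x y where "x \<noteq> y" "e0 = {x, y}"
    using edge_doubleton perfect_matching_subset[OF base_perfect_matching] e0(1) by blast
  then obtain b where b: "b \<noteq> v" "e0 = {v, b}"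
    using e0(2) by (metis insertE insert_commute singletonD)
  have bV: "b \<in> V" using edge_subset_verts perfect_matching_subset[OF base_perfect_matching] e0(1) b
    by blast
  have b_out: "\<forall>j<k. b \<notin> \<Union>(hs j)"
  proof (intro allI impI notI)
    fix j assume "j < k" "b \<in> \<Union>(hs j)"
    then have "e0 \<in> hs j" using family_alternating e0(1) b(2) by blast
    then show False using v_out e0(2) \<open>j < k\<close> by blast
  qed
  have "e = {v, b}" if "e \<in> cover" "v \<in> e \<or> b \<in> e" for e
  proof -
    have "\<forall>j<k. e \<notin> hs j" using v_out b_out that(2) by blast
    then have e_M0: "e \<in> M0" using that(1) by (auto simp: resonant_cover_def)
    show ?thesis using that(2)
    proof
      assume "v \<in> e"
      then show ?thesis using perfect_matching_unique[OF base_perfect_matching vV e_M0 _ e0] b by blast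
    next
      assume "b \<in> e"
      then show ?thesis using perfect_matching_unique[OF base_perfect_matching bV e_M0 _ e0(1)] b by blast
    qed
  qed
  moreover have "{v, b} \<in> cover" using e0 b by (auto simp: resonant_cover_def)
  moreover have "{} \<notin> cover" using edge_nonempty resonant_cover_subset_edges by blast
  ultimately show ?thesis using isolated_edge_component[of v b cover] b(1) by blast
qed

lemma clar_cover_resonant_cover: "clar_cover V E Hx cover"
  unfolding clar_cover_def
proof (intro conjI ballI)
  show "cover \<subseteq> E" by (rule resonant_cover_subset_edges)
  fix v assume vV: "v \<in> V"
  show "(comp_edges cover v \<in> Hx \<and> comp_verts cover v = \<Union>(comp_edges cover v)) \<or>
        (\<exists>a b. a \<noteq> b \<and> comp_verts cover v = {a, b} \<and> comp_edges cover v = {{a, b}})"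
  proof (cases "\<exists>j<k. v \<in> \<Union>(hs j)")
    case True
    then obtain j where j: "j < k" "v \<in> \<Union>(hs j)" by blast
    show ?thesis using family_hexagon_component[OF j] family_hexagon[OF j(1)] by auto
  next
    case False
    then show ?thesis using matching_edge_component[OF vV] by blast
  qed
qed

lemma hex_components_resonant_cover: "hex_components V Hx cover = hs ` {..<k}"
proof
  show "hex_components V Hx cover \<subseteq> hs ` {..<k}"
  proof
    fix h assume "h \<in> hex_components V Hx cover"
    then obtain v where v: "v \<in> V" "h = comp_edges cover v" "h \<in> Hx"
      by (auto simp: hex_components_def)
    show "h \<in> hs ` {..<k}"
    proof (cases "\<exists>j<k. v \<in> \<Union>(hs j)")
      case True
      then obtain j where j: "j < k" "v \<in> \<Union>(hs j)" by blast
      then have "h = hs j" using family_hexagon_component(2)[OF j] v(2) by simp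
      then show ?thesis using j(1) by blast
    next
      case False
      then obtain b where "comp_edges cover v = {{v, b}}" using matching_edge_component[OF v(1)] by blast
      then show ?thesis using card_hexagon[OF is_hexagon_hexagons[OF v(3)]] v(2) by simp
    qed
  qed
  show "hs ` {..<k} \<subseteq> hex_components V Hx cover"
  proof
    fix h assume "h \<in> hs ` {..<k}"
    then obtain j where j: "j < k" "h = hs j" by blast
    obtain v where v: "v \<in> \<Union>(hs j)"
      using hexagon_nonempty[OF is_hexagon_hexagons[OF family_hexagon[OF j(1)]]] by blast
    have "v \<in> V" using hexagon_vertex[OF family_hexagon[OF j(1)] v] .
    moreover have "h = comp_edges cover v" using family_hexagon_component(2)[OF j(1) v] j(2) by simp
    moreover have "comp_edges cover v \<in> Hx" using family_hexagon[OF j(1)] calculation(2) j(2) by simp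
    ultimately show "h \<in> hex_components V Hx cover" unfolding hex_components_def by blast
  qed
qed

lemma card_hex_components_resonant_cover: "card (hex_components V Hx cover) = k"
proof -
  have "inj_on hs {..<k}"
  proof (rule inj_onI)
    fix j l assume "j \<in> {..<k}" "l \<in> {..<k}" "hs j = hs l"
    then show "j = l"
      using family_disjoint[of j l] hexagon_nonempty[OF is_hexagon_hexagons[OF family_hexagon[of j]]] by auto
  qed
  then show ?thesis by (simp add: hex_components_resonant_cover card_image)
qed

lemma perfect_matchings_within_cover_induced_cube:
  "perfect_matchings_within V E cover \<in> induced_cubes (res_verts V E) (res_adj Hx) k"
proof -
  have "bij_betw twist (Pow {..<k}) (twist ` Pow {..<k})"
    using inj_on_twist by (simp add: bij_betw_def)
  moreover have "\<forall>A\<in>Pow {..<k}. \<forall>B\<in>Pow {..<k}. cube_adj A B \<longleftrightarrow> res_adj Hx (twist A) (twist B)"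
    using twist_adjacent_iff by (simp add: cube_adj_def res_adj_def)
  ultimately show ?thesis
    unfolding perfect_matchings_within_cover induced_cubes_def
    by (auto simp: res_verts_def intro: twist_perfect_matching)
qed

end

section \<open>Cubes in the resonance graph\<close>

locale resonance_cube = hexagon_graph +
  fixes f :: "nat set \<Rightarrow> 'a set set" and i :: nat
  assumes cube_perfect_matching: "\<And>A. A \<subseteq> {..<i} \<Longrightarrow> perfect_matching V E (f A)"
    and cube_inj: "\<And>A B. A \<subseteq> {..<i} \<Longrightarrow> B \<subseteq> {..<i} \<Longrightarrow> f A = f B \<Longrightarrow> A = B"
    and cube_edge:
      "\<And>A B. A \<subseteq> {..<i} \<Longrightarrow> B \<subseteq> {..<i} \<Longrightarrow> card (sym_diff A B) = 1 \<Longrightarrow> sym_diff (f A) (f B) \<in> Hx"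
begin

definition cube_hexagon :: "nat \<Rightarrow> 'a set set" where
  "cube_hexagon j = sym_diff (f {}) (f {j})"

lemma cube_edge_insert:
  assumes "A \<subseteq> {..<i}" "j < i" "j \<notin> A"
  shows "sym_diff (f A) (f (insert j A)) \<in> Hx"
proof -
  have "sym_diff A (insert j A) = {j}" using assms(3) by blast
  then show ?thesis using cube_edge assms by simp
qed

text \<open>All edges of the cube in direction \<open>j\<close> carry the same hexagon: induction on \<open>A\<close>,
  each step being an instance of \<open>resonance_square\<close>.\<close>

lemma cube_parallel_edges:
  assumes "A \<subseteq> {..<i}" "j < i" "j \<notin> A"
  shows "sym_diff (f A) (f (insert j A)) = cube_hexagon j"
proof -
  have "finite A" using assms(1) finite_subset by blast
  then show ?thesis using assms
  proof (induction A rule: finite_induct)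
    case empty
    then show ?case by (simp add: cube_hexagon_def)
  next
    case (insert a A)
    have a: "a < i" "a \<noteq> j" "A \<subseteq> {..<i}" "j \<notin> A" "a \<notin> A" using insert by auto
    have "sym_diff (f (insert a A)) (f (insert j (insert a A))) = sym_diff (f A) (f (insert j A))"
    proof (rule resonance_square)
      show "sym_diff (f A) (f (insert j A)) \<in> Hx"
        using cube_edge_insert a insert.prems(2) by blast
      show "sym_diff (f A) (f (insert a A)) \<in> Hx"
        using cube_edge_insert a by blast
      have "insert j (insert a A) = insert a (insert j A)" by blast
      then show "sym_diff (f (insert j A)) (f (insert j (insert a A))) \<in> Hx"
        using cube_edge_insert[of "insert j A" a] a insert.prems(2) by simp
      show "sym_diff (f (insert a A)) (f (insert j (insert a A))) \<in> Hx"
        using cube_edge_insert[of "insert a A" j] a insert.prems(2) by simp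
      show "f (insert j A) \<noteq> f (insert a A)"
        using cube_inj[of "insert j A" "insert a A"] a insert.prems(2) by blast
      show "f A \<noteq> f (insert j (insert a A))"
        using cube_inj[of A "insert j (insert a A)"] a insert.prems(2) by blast
    qed
    then show ?case using insert.IH a insert.prems(2) by simp
  qed
qed

lemma cube_insert:
  assumes "A \<subseteq> {..<i}" "j < i" "j \<notin> A"
  shows "f (insert j A) = sym_diff (f A) (cube_hexagon j)"
  using cube_parallel_edges[OF assms] by (auto simp: set_eq_iff)

lemma cube_hexagon_in_hexagons: "j < i \<Longrightarrow> cube_hexagon j \<in> Hx"
  using cube_edge_insert[of "{}" j] by (simp add: cube_hexagon_def)

lemma cube_hexagons_distinct:
  assumes "j < i" "l < i" "j \<noteq> l"
  shows "cube_hexagon j \<noteq> cube_hexagon l"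
proof
  assume eq: "cube_hexagon j = cube_hexagon l"
  have "f {j, l} = sym_diff (f {j}) (cube_hexagon l)"
    using cube_insert[of "{j}" l] assms by (simp add: insert_commute)
  also have "\<dots> = f {}" unfolding eq[symmetric] by (auto simp: cube_hexagon_def set_eq_iff)
  finally show False using cube_inj[of "{j, l}" "{}"] assms by simp
qed

lemma resonant_family_cube_hexagons: "resonant_family V E Hx (f {}) cube_hexagon i"
proof unfold_locales
  have pm0: "perfect_matching V E (f {})" using cube_perfect_matching by simp
  have pm1: "perfect_matching V E (sym_diff (f {}) (cube_hexagon j))" if "j < i" for j
    using cube_perfect_matching[of "{j}"] cube_insert[of "{}" j] that by simp
  show "perfect_matching V E (f {})" by (rule pm0)
  show "cube_hexagon j \<in> Hx" if "j < i" for j using cube_hexagon_in_hexagons that .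
  show "\<Union>(cube_hexagon j) \<inter> \<Union>(cube_hexagon l) = {}" if "j < i" "l < i" "j \<noteq> l" for j l
  proof (rule resonant_hexagons_disjoint[OF pm0 pm1[OF that(1)] pm1[OF that(2)]])
    show "perfect_matching V E (sym_diff (sym_diff (f {}) (cube_hexagon j)) (cube_hexagon l))"
      using cube_perfect_matching[of "{j, l}"] cube_insert[of "{}" j] cube_insert[of "{j}" l] that
      by (simp add: insert_commute)
  qed (use cube_hexagon_in_hexagons cube_hexagons_distinct that in auto)
  show "e \<in> cube_hexagon j"
    if "j < i" "e \<in> f {}" "v \<in> \<Union>(cube_hexagon j)" "v \<in> e" for j e v
    using alternating_hexagon_edge[OF pm0 pm1 cube_hexagon_in_hexagons] that by blast
qed

lemma cube_eq_twist:
  assumes "A \<subseteq> {..<i}"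
  shows "f A = hexagon_twist (f {}) cube_hexagon A"
proof -
  interpret family: resonant_family V E Hx "f {}" cube_hexagon i
    by (rule resonant_family_cube_hexagons)
  have "finite A" using assms finite_subset by blast
  then show ?thesis using assms
  proof (induction A rule: finite_induct)
    case empty
    then show ?case by (simp add: hexagon_twist_def)
  next
    case (insert j A)
    have "\<Union>(cube_hexagon ` A) \<inter> cube_hexagon j = {}"
      using family.family_edges_disjoint insert by blast
    then show ?case
      using cube_insert[of A j] insert by (auto simp: hexagon_twist_def set_eq_iff)
  qed
qed

end

definition clar_matching :: "'a set set set \<Rightarrow> 'a set set \<Rightarrow> ('a set set \<Rightarrow> 'a set set) \<Rightarrow> 'a set set"
  where "clar_matching Hs F P = (F - \<Union>Hs) \<union> \<Union>(P ` Hs)"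

context hexagon_graph
begin

context
  fixes F :: "'a set set"
  assumes clar: "clar_cover V E Hx F"
begin

lemma clar_cover_component:
  "v \<in> V \<Longrightarrow> (comp_edges F v \<in> Hx \<and> comp_verts F v = \<Union>(comp_edges F v)) \<or>
     (\<exists>a b. a \<noteq> b \<and> comp_verts F v = {a, b} \<and> comp_edges F v = {{a, b}})"
  using clar by (simp add: clar_cover_def)

lemma edge_in_clar_component:
  assumes "e \<in> F" "v \<in> e"
  shows "e \<in> comp_edges F v"
proof -
  have "e \<in> E" using clar assms(1) by (auto simp: clar_cover_def)
  then obtain x y where "e = {x, y}" using edge_doubleton by blast
  then show ?thesis using edge_in_comp_edges[of x y F v] assms by simp
qed

lemma hex_component:
  assumes "h \<in> hex_components V Hx F" "u \<in> \<Union>h"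
  shows "comp_edges F u = h" "comp_verts F u = \<Union>h"
proof -
  obtain w where w: "w \<in> V" "h = comp_edges F w" "h \<in> Hx"
    using assms(1) by (auto simp: hex_components_def)
  have "comp_verts F w = \<Union>h"
    using clar_cover_component[OF w(1)] card_hexagon[OF is_hexagon_hexagons[OF w(3)]] w(2) by auto
  moreover have "u \<in> comp_verts F w" using calculation assms(2) by simp
  ultimately show "comp_edges F u = h" "comp_verts F u = \<Union>h"
    using comp_verts_eq[of u F w] comp_edges_eq[of u F w] w(2) by simp_all
qed

lemma hex_component_edge:
  "h \<in> hex_components V Hx F \<Longrightarrow> u \<in> \<Union>h \<Longrightarrow> e \<in> F \<Longrightarrow> u \<in> e \<Longrightarrow> e \<in> h"
  using hex_component edge_in_clar_component by blast

lemma hex_components_disjoint: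
  "h \<in> hex_components V Hx F \<Longrightarrow> h' \<in> hex_components V Hx F \<Longrightarrow> u \<in> \<Union>h \<Longrightarrow> u \<in> \<Union>h' \<Longrightarrow> h = h'"
  using hex_component by metis

lemma edge_component:
  assumes "v \<in> V" "\<forall>h\<in>hex_components V Hx F. v \<notin> \<Union>h"
  shows "\<exists>a b. a \<noteq> b \<and> comp_verts F v = {a, b} \<and> comp_edges F v = {{a, b}}"
proof -
  have "comp_edges F v \<notin> Hx \<or> comp_verts F v \<noteq> \<Union>(comp_edges F v)"
  proof (rule ccontr)
    assume "\<not> ?thesis"
    then have "comp_edges F v \<in> hex_components V Hx F" "v \<in> \<Union>(comp_edges F v)"
      using assms(1) comp_verts_self[of v F] by (auto simp: hex_components_def)
    then show False using assms(2) by blast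
  qed
  then show ?thesis using clar_cover_component[OF assms(1)] by blast
qed

lemma hex_components_hexagons: "hex_components V Hx F \<subseteq> Hx"
  by (auto simp: hex_components_def)

lemma Union_hex_components_subset: "\<Union>(hex_components V Hx F) \<subseteq> F"
  by (auto simp: hex_components_def comp_edges_def)

lemma edge_outside_hex_components:
  "e \<in> F - \<Union>(hex_components V Hx F) \<Longrightarrow> u \<in> e \<Longrightarrow> h \<in> hex_components V Hx F \<Longrightarrow> u \<notin> \<Union>h"
  using hex_component_edge by blast

context
  fixes P :: "'a set set \<Rightarrow> 'a set set"
  assumes hexagon_matching: "\<And>h. h \<in> hex_components V Hx F \<Longrightarrow> perfect_matching (\<Union>h) h (P h)"
begin

lemma hexagon_matching_subset: "h \<in> hex_components V Hx F \<Longrightarrow> P h \<subseteq> h"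
  using hexagon_matching by (simp add: perfect_matching_def)

lemma Un_clar_matching:
  "clar_matching (hex_components V Hx F) F P \<union> \<Union>(hex_components V Hx F) = F"
  using Union_hex_components_subset hexagon_matching_subset by (auto simp: clar_matching_def)

lemma clar_matching_alternating:
  assumes "h \<in> hex_components V Hx F" "e \<in> clar_matching (hex_components V Hx F) F P"
    and "v \<in> \<Union>h" "v \<in> e"
  shows "e \<in> h"
proof -
  from assms(2) have "e \<in> F - \<Union>(hex_components V Hx F) \<or> (\<exists>h'\<in>hex_components V Hx F. e \<in> P h')"
    by (auto simp: clar_matching_def)
  then show ?thesis
  proof
    assume "e \<in> F - \<Union>(hex_components V Hx F)"
    then show ?thesis using edge_outside_hex_components assms by blast
  next
    assume "\<exists>h'\<in>hex_components V Hx F. e \<in> P h'"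
    then obtain h' where h': "h' \<in> hex_components V Hx F" "e \<in> h'"
      using hexagon_matching_subset by blast
    then have "h' = h" using hex_components_disjoint assms(1,3,4) by blast
    then show ?thesis using h' by simp
  qed
qed

lemma clar_matching_perfect_matching:
  "perfect_matching V E (clar_matching (hex_components V Hx F) F P)"
  unfolding perfect_matching_def
proof (intro conjI ballI)
  let ?M = "clar_matching (hex_components V Hx F) F P"
  show "?M \<subseteq> E" using Un_clar_matching clar by (auto simp: clar_cover_def)
  fix v assume vV: "v \<in> V"
  show "\<exists>!e. e \<in> ?M \<and> v \<in> e"
  proof (cases "\<exists>h\<in>hex_components V Hx F. v \<in> \<Union>h")
    case True
    then obtain h where h: "h \<in> hex_components V Hx F" "v \<in> \<Union>h" by blast
    have "\<exists>!e. e \<in> P h \<and> v \<in> e"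
      using hexagon_matching[OF h(1)] h(2) unfolding perfect_matching_def by blast
    moreover have "x \<in> ?M \<and> v \<in> x \<longleftrightarrow> x \<in> P h \<and> v \<in> x" for x
    proof
      assume x: "x \<in> ?M \<and> v \<in> x"
      then have "x \<notin> F - \<Union>(hex_components V Hx F)"
        using clar_matching_alternating[OF h(1)] h by blast
      then obtain h' where h': "h' \<in> hex_components V Hx F" "x \<in> P h'"
        using x by (auto simp: clar_matching_def)
      then have "h' = h"
        using hex_components_disjoint[OF _ h(1) _ h(2)] hexagon_matching_subset x by blast
      then show "x \<in> P h \<and> v \<in> x" using h' x by simp
    next
      assume "x \<in> P h \<and> v \<in> x"
      then show "x \<in> ?M \<and> v \<in> x" using h(1) by (auto simp: clar_matching_def)
    qed
    ultimately show ?thesis by simp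
  next
    case False
    obtain a b where ab: "comp_verts F v = {a, b}" "comp_edges F v = {{a, b}}"
      using edge_component[OF vV] False by blast
    have "{a, b} \<in> F" using ab(2) by (auto simp: comp_edges_def)
    moreover have "v \<in> {a, b}" using ab(1) comp_verts_self[of v F] by simp
    ultimately have "{a, b} \<in> ?M" using False by (auto simp: clar_matching_def)
    moreover have "x = {a, b}" if "x \<in> ?M" "v \<in> x" for x
    proof -
      have "x \<notin> \<Union>(P ` hex_components V Hx F)" using False that(2) hexagon_matching_subset by blast
      then have "x \<in> F" using that(1) by (auto simp: clar_matching_def)
      then show ?thesis using edge_in_clar_component that(2) ab(2) by blast
    qed
    ultimately show ?thesis using \<open>v \<in> {a, b}\<close> by blast
  qed
qed

end

lemma clar_cover_base_matching:
  obtains M0 where "perfect_matching V E M0" "M0 \<union> \<Union>(hex_components V Hx F) = F"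
    and "\<And>h e v. h \<in> hex_components V Hx F \<Longrightarrow> e \<in> M0 \<Longrightarrow> v \<in> \<Union>h \<Longrightarrow> v \<in> e \<Longrightarrow> e \<in> h"
proof -
  have "\<exists>N. perfect_matching (\<Union>h) h N" if "h \<in> hex_components V Hx F" for h
    using hexagon_perfect_matching_ex is_hexagon_hexagons hex_components_hexagons that by blast
  then obtain P where "\<And>h. h \<in> hex_components V Hx F \<Longrightarrow> perfect_matching (\<Union>h) h (P h)"
    by metis
  then show ?thesis
    using that clar_matching_perfect_matching Un_clar_matching clar_matching_alternating by blast
qed

lemma clar_cover_resonant_family:
  obtains M0 hs where "resonant_family V E Hx M0 hs (card (hex_components V Hx F))"
    and "F = resonant_cover M0 hs (card (hex_components V Hx F))"
proof -
  define k where "k = card (hex_components V Hx F)"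
  obtain M0 where M0: "perfect_matching V E M0" "M0 \<union> \<Union>(hex_components V Hx F) = F"
    and alternating: "\<And>h e v. h \<in> hex_components V Hx F \<Longrightarrow> e \<in> M0 \<Longrightarrow> v \<in> \<Union>h \<Longrightarrow> v \<in> e \<Longrightarrow> e \<in> h"
    using clar_cover_base_matching by blast
  have "finite (hex_components V Hx F)"
    using finite_hexagons by (rule finite_subset[rotated]) (auto simp: hex_components_def)
  then obtain hs where hs: "bij_betw hs {..<k} (hex_components V Hx F)"
    using ex_bij_betw_nat_finite unfolding k_def atLeast0LessThan by blast
  then have hs_in: "hs j \<in> hex_components V Hx F" if "j < k" for j
    using that bij_betwE by blast
  have "resonant_family V E Hx M0 hs k"
  proof unfold_locales
    show "perfect_matching V E M0" by (rule M0(1))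
    show "hs j \<in> Hx" if "j < k" for j using hs_in[OF that] by (auto simp: hex_components_def)
    show "\<Union>(hs j) \<inter> \<Union>(hs l) = {}" if "j < k" "l < k" "j \<noteq> l" for j l
    proof -
      have "hs j \<noteq> hs l" using inj_onD[OF bij_betw_imp_inj_on[OF hs]] that by blast
      then show ?thesis using hex_components_disjoint[OF hs_in[OF that(1)] hs_in[OF that(2)]] by blast
    qed
    show "e \<in> hs j" if "j < k" "e \<in> M0" "v \<in> \<Union>(hs j)" "v \<in> e" for j e v
      using alternating hs_in that by blast
  qed
  moreover have "F = resonant_cover M0 hs k"
    using M0(2) bij_betw_imp_surj_on[OF hs] by (simp add: resonant_cover_def)
  ultimately show ?thesis using that unfolding k_def by blast
qed

end

lemma clar_cover_perfect_matchings_within: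
  assumes "clar_cover V E Hx F"
  shows "perfect_matchings_within V E F \<in>
           induced_cubes (res_verts V E) (res_adj Hx) (card (hex_components V Hx F))"
    and "\<Union>(perfect_matchings_within V E F) = F"
proof -
  define k where "k = card (hex_components V Hx F)"
  obtain M0 hs where family: "resonant_family V E Hx M0 hs k" and F: "F = resonant_cover M0 hs k"
    using clar_cover_resonant_family[OF assms] unfolding k_def by blast
  interpret resonant_family V E Hx M0 hs k by (rule family)
  have "perfect_matchings_within V E F \<in> induced_cubes (res_verts V E) (res_adj Hx) k"
    unfolding F by (rule perfect_matchings_within_cover_induced_cube)
  then show "perfect_matchings_within V E F \<in>
      induced_cubes (res_verts V E) (res_adj Hx) (card (hex_components V Hx F))"
    by (simp only: k_def)
  show "\<Union>(perfect_matchings_within V E F) = F"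
    unfolding F by (rule Union_perfect_matchings_within_cover)
qed

lemma induced_cube_perfect_matchings_within:
  assumes "S \<in> induced_cubes (res_verts V E) (res_adj Hx) i"
  shows "\<exists>F. clar_cover V E Hx F \<and> card (hex_components V Hx F) = i \<and>
             S = perfect_matchings_within V E F"
proof -
  obtain f where S: "S \<subseteq> res_verts V E" "bij_betw f (Pow {..<i}) S"
    and adj: "\<forall>A\<in>Pow {..<i}. \<forall>B\<in>Pow {..<i}. cube_adj A B \<longleftrightarrow> res_adj Hx (f A) (f B)"
    using assms unfolding induced_cubes_def by blast
  interpret resonance_cube V E Hx f i
  proof unfold_locales
    show "perfect_matching V E (f A)" if "A \<subseteq> {..<i}" for A
    proof -
      have "f A \<in> S" using bij_betwE[OF S(2)] that by blast
      then show ?thesis using S(1) by (auto simp: res_verts_def)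
    qed
    show "A = B" if "A \<subseteq> {..<i}" "B \<subseteq> {..<i}" "f A = f B" for A B
      using inj_onD[OF bij_betw_imp_inj_on[OF S(2)] that(3)] that(1,2) by simp
    show "sym_diff (f A) (f B) \<in> Hx" if "A \<subseteq> {..<i}" "B \<subseteq> {..<i}" "card (sym_diff A B) = 1" for A B
    proof -
      have "cube_adj A B" using that(3) by (simp add: cube_adj_def)
      then have "res_adj Hx (f A) (f B)" using adj that(1,2) by blast
      then show ?thesis by (simp add: res_adj_def)
    qed
  qed
  interpret family: resonant_family V E Hx "f {}" cube_hexagon i
    by (rule resonant_family_cube_hexagons)
  have "S = f ` Pow {..<i}" using S(2) by (simp add: bij_betw_def)
  also have "\<dots> = family.twist ` Pow {..<i}"
  proof (rule image_cong)
    show "f A = family.twist A" if "A \<in> Pow {..<i}" for A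
      using cube_eq_twist[of A] that by blast
  qed simp
  also have "\<dots> = perfect_matchings_within V E family.cover"
    using family.perfect_matchings_within_cover by simp
  finally show ?thesis
    using family.clar_cover_resonant_cover family.card_hex_components_resonant_cover
    by (intro exI[of _ family.cover]) simp
qed

theorem clar_number_z_eq_cube_count:
  "clar_number_z V E Hx i = cube_count (res_verts V E) (res_adj Hx) i"
proof -
  let ?covers = "{F. clar_cover V E Hx F \<and> card (hex_components V Hx F) = i}"
  have "bij_betw (perfect_matchings_within V E) ?covers (induced_cubes (res_verts V E) (res_adj Hx) i)"
  proof (rule bij_betw_imageI)
    show "inj_on (perfect_matchings_within V E) ?covers"
    proof (rule inj_on_inverseI[where g = Union])
      fix F assume "F \<in> ?covers"
      then show "\<Union>(perfect_matchings_within V E F) = F"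
        using clar_cover_perfect_matchings_within(2) by blast
    qed
    show "perfect_matchings_within V E ` ?covers = induced_cubes (res_verts V E) (res_adj Hx) i"
    proof
      show "perfect_matchings_within V E ` ?covers \<subseteq> induced_cubes (res_verts V E) (res_adj Hx) i"
      proof
        fix S assume "S \<in> perfect_matchings_within V E ` ?covers"
        then obtain F where "F \<in> ?covers" "S = perfect_matchings_within V E F" by blast
        then show "S \<in> induced_cubes (res_verts V E) (res_adj Hx) i"
          using clar_cover_perfect_matchings_within(1)[of F] by simp
      qed
      show "induced_cubes (res_verts V E) (res_adj Hx) i \<subseteq> perfect_matchings_within V E ` ?covers"
      proof
        fix S assume "S \<in> induced_cubes (res_verts V E) (res_adj Hx) i"
        then obtain F where "clar_cover V E Hx F" "card (hex_components V Hx F) = i"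
          "S = perfect_matchings_within V E F"
          using induced_cube_perfect_matchings_within by blast
        then show "S \<in> perfect_matchings_within V E ` ?covers" by blast
      qed
    qed
  qed
  then show ?thesis
    unfolding clar_number_z_def cube_count_eq_card_induced_cubes by (rule bij_betw_same_card)
qed

end

section \<open>The brick-wall model of the hexagonal lattice\<close>

lemma hex_edges_eq: "hex_edges (x,y) =
     {{(x,y),(x+1,y)}, {(x+1,y),(x+2,y)}, {(x,y+1),(x+1,y+1)}, {(x+1,y+1),(x+2,y+1)},
      {(x,y),(x,y+1)}, {(x+2,y),(x+2,y+1)}}" by (simp add: hex_edges_def)

lemma mem_hex_edges: "e \<in> hex_edges (x,y) \<Longrightarrow> e = {(x,y),(x+1,y)} \<or> e = {(x+1,y),(x+2,y)} \<or>
   e = {(x,y+1),(x+1,y+1)} \<or> e = {(x+1,y+1),(x+2,y+1)} \<or> e = {(x,y),(x,y+1)} \<or> e = {(x+2,y),(x+2,y+1)}"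
  by (simp add: hex_edges_eq)

lemma hex_edges_common_east:
  assumes "e \<in> hex_edges (x,y)" "e \<in> hex_edges (x+2,y)"
  shows "e = {(x+2,y),(x+2,y+1)}"
  using mem_hex_edges[OF assms(1)] assms(2) by (elim disjE) (simp_all add: hex_edges_eq doubleton_eq_iff)

lemma hex_edges_common_northeast:
  assumes "e \<in> hex_edges (x,y)" "e \<in> hex_edges (x+1,y+1)"
  shows "e = {(x+1,y+1),(x+2,y+1)}"
  using mem_hex_edges[OF assms(1)] assms(2) by (elim disjE) (simp_all add: hex_edges_eq doubleton_eq_iff)

lemma hex_edges_common_southeast:
  assumes "e \<in> hex_edges (x,y)" "e \<in> hex_edges (x+1,y-1)"
  shows "e = {(x+1,y),(x+2,y)}"
  using mem_hex_edges[OF assms(1)] assms(2) by (elim disjE) (simp_all add: hex_edges_eq doubleton_eq_iff)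

lemma hex_edges_bounds:
  assumes "e \<in> hex_edges (x,y)" "p \<in> e"
  shows "x \<le> fst p \<and> fst p \<le> x+2 \<and> y \<le> snd p \<and> snd p \<le> y+1"
  using mem_hex_edges[OF assms(1)] assms(2) by auto

lemma cells_sharing_edge:
  assumes "e \<in> hex_edges (x,y)" "e \<in> hex_edges (x',y')" "even (x+y)" "even (x'+y')"
  shows "(x',y') = (x,y) \<or> (x',y') = (x+2,y) \<or> (x',y') = (x-2,y) \<or> (x',y') = (x+1,y+1) \<or>
         (x',y') = (x-1,y+1) \<or> (x',y') = (x+1,y-1) \<or> (x',y') = (x-1,y-1)"
proof -
  obtain p where p: "p \<in> e" using mem_hex_edges[OF assms(1)] by auto
  have b1: "x \<le> fst p \<and> fst p \<le> x+2 \<and> y \<le> snd p \<and> snd p \<le> y+1" using hex_edges_bounds[OF assms(1) p] .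
  have b2: "x' \<le> fst p \<and> fst p \<le> x'+2 \<and> y' \<le> snd p \<and> snd p \<le> y'+1" using hex_edges_bounds[OF assms(2) p] .
  have "x' - x \<le> 2" "x - x' \<le> 2" "y' - y \<le> 1" "y - y' \<le> 1" using b1 b2 by auto
  then have "(x' = x \<and> y' = y) \<or> (x' = x+2 \<and> y' = y) \<or> (x' = x-2 \<and> y' = y) \<or> (x' = x+1 \<and> y' = y+1) \<or>
         (x' = x-1 \<and> y' = y+1) \<or> (x' = x+1 \<and> y' = y-1) \<or> (x' = x-1 \<and> y' = y-1)"
    using assms(3,4) by presburger
  then show ?thesis by auto
qed


lemma is_hexagon_hex_edges: "is_hexagon (hex_edges c)"
proof -
  obtain x y where c: "c = (x,y)" by (cases c)
  have d: "distinct [(x,y),(x+1,y),(x+2,y),(x+2,y+1),(x+1,y+1),(x,y+1)]" by auto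
  have "hex_edges c = {{(x,y),(x+1,y)},{(x+1,y),(x+2,y)},{(x+2,y),(x+2,y+1)},{(x+2,y+1),(x+1,y+1)},{(x+1,y+1),(x,y+1)},{(x,y+1),(x,y)}}"
    unfolding c hex_edges_eq by (simp add: insert_commute)
  then show ?thesis unfolding is_hexagon_def using d by blast
qed

lemma hex_edges_common_edge_unique:
  assumes cl: "is_cell c" "is_cell c'" and ne: "c \<noteq> c'"
    and e: "e1 \<in> hex_edges c" "e1 \<in> hex_edges c'" "e2 \<in> hex_edges c" "e2 \<in> hex_edges c'"
  shows "e1 = e2"
proof -
  obtain x y where c: "c = (x,y)" by (cases c)
  obtain x' y' where c': "c' = (x',y')" by (cases c')
  have ev: "even (x+y)" "even (x'+y')" using cl c c' by (auto simp: is_cell_def)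
  have e': "e1 \<in> hex_edges (x,y)" "e1 \<in> hex_edges (x',y')" "e2 \<in> hex_edges (x,y)" "e2 \<in> hex_edges (x',y')"
    using e c c' by auto
  have "(x',y') \<noteq> (x,y)" using ne c c' by auto
  then have "(x',y') = (x+2,y) \<or> (x',y') = (x-2,y) \<or> (x',y') = (x+1,y+1) \<or>
         (x',y') = (x-1,y+1) \<or> (x',y') = (x+1,y-1) \<or> (x',y') = (x-1,y-1)"
    using cells_sharing_edge[OF e'(1,2) ev] by blast
  then show ?thesis
  proof (elim disjE)
    assume "(x',y') = (x+2,y)"
    then have "x' = x+2" "y' = y" by auto
    then show ?thesis using hex_edges_common_east[OF e'(1)] hex_edges_common_east[OF e'(3)] e'(2,4) by simp
  next
    assume "(x',y') = (x-2,y)"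
    then have "x = x'+2" "y = y'" by auto
    then show ?thesis using hex_edges_common_east[OF e'(2)] hex_edges_common_east[OF e'(4)] e'(1,3) by simp
  next
    assume "(x',y') = (x+1,y+1)"
    then have "x' = x+1" "y' = y+1" by auto
    then show ?thesis using hex_edges_common_northeast[OF e'(1)] hex_edges_common_northeast[OF e'(3)] e'(2,4) by simp
  next
    assume "(x',y') = (x-1,y+1)"
    then have "x = x'+1" "y = y'-1" by auto
    then show ?thesis using hex_edges_common_southeast[OF e'(2)] hex_edges_common_southeast[OF e'(4)] e'(1,3) by simp
  next
    assume "(x',y') = (x+1,y-1)"
    then have "x' = x+1" "y' = y-1" by auto
    then show ?thesis using hex_edges_common_southeast[OF e'(1)] hex_edges_common_southeast[OF e'(3)] e'(2,4) by simp
  next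
    assume "(x',y') = (x-1,y-1)"
    then have "x = x'+1" "y = y'+1" by auto
    then show ?thesis using hex_edges_common_northeast[OF e'(2)] hex_edges_common_northeast[OF e'(4)] e'(1,3) by simp
  qed
qed

lemma finite_cyc_edges: "finite (cyc_edges vs)"
proof -
  have "cyc_edges vs = (\<lambda>i. {vs ! i, vs ! ((i + 1) mod length vs)}) ` {..<length vs}"
    by (auto simp: cyc_edges_def)
  then show ?thesis by simp
qed

lemma finite_cells_containing_edge:
  assumes "p \<in> e"
  shows "finite {c. e \<in> hex_edges c}"
proof -
  have "{c. e \<in> hex_edges c} \<subseteq> (\<lambda>(dx,dy). (fst p - dx, snd p - dy)) ` ({0,1,2} \<times> {0,1})"
  proof
    fix c assume "c \<in> {c. e \<in> hex_edges c}"
    then have ec: "e \<in> hex_edges c" by simp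
    obtain x y where c: "c = (x,y)" by (cases c)
    have b: "x \<le> fst p \<and> fst p \<le> x+2 \<and> y \<le> snd p \<and> snd p \<le> y+1" using hex_edges_bounds[OF ec[unfolded c] assms] .
    then have m: "(fst p - x, snd p - y) \<in> {0,1,2} \<times> {0,1}" by auto
    have "c = (\<lambda>(dx,dy). (fst p - dx, snd p - dy)) (fst p - x, snd p - y)" using c by simp
    then show "c \<in> (\<lambda>(dx,dy). (fst p - dx, snd p - dy)) ` ({0,1,2} \<times> {0,1})" using m by blast
  qed
  then show ?thesis by (rule finite_subset) simp
qed

lemma symp_cell_step: "symp (cell_step C)"
  unfolding symp_def cell_step_def by blast

lemma cell_step_rtranclp_is_cell: "(cell_step C)\<^sup>*\<^sup>* a b \<Longrightarrow> is_cell a \<Longrightarrow> is_cell b"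
  by (induction rule: rtranclp_induct) (auto simp: cell_step_def)

text \<open>A reachable cell with maximal first coordinate cannot step to its east neighbour,
  so their common edge lies on the cycle.\<close>

lemma inner_cell_reaches_cycle:
  assumes ih: "inner_cell C h"
  shows "\<exists>b. (cell_step C)\<^sup>*\<^sup>* h b \<and> is_cell b \<and> hex_edges b \<inter> C \<noteq> {}"
proof -
  define R where "R = {h'. (cell_step C)\<^sup>*\<^sup>* h h'}"
  have fR: "finite R" using ih by (simp add: inner_cell_def R_def)
  have hR: "h \<in> R" by (simp add: R_def)
  define m where "m = Max (fst ` R)"
  have "m \<in> fst ` R" using fR hR unfolding m_def by (intro Max_in) auto
  then obtain b where bR: "b \<in> R" and bm: "fst b = m" by auto
  have maxb: "fst b' \<le> m" if "b' \<in> R" for b' using fR that unfolding m_def by (intro Max_ge) auto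
  have bc: "is_cell b" using bR ih cell_step_rtranclp_is_cell by (auto simp: R_def inner_cell_def)
  obtain x y where b: "b = (x,y)" by (cases b)
  have s1: "{(x+2,y),(x+2,y+1)} \<in> hex_edges b" by (simp add: b hex_edges_eq)
  have s2: "{(x+2,y),(x+2,y+1)} \<in> hex_edges (x+2,y)" by (simp add: hex_edges_eq)
  have cc: "is_cell (x+2,y)" using bc b by (simp add: is_cell_def)
  have sC: "{(x+2,y),(x+2,y+1)} \<in> C"
  proof (rule ccontr)
    assume nC: "{(x+2,y),(x+2,y+1)} \<notin> C"
    have "b \<noteq> (x+2,y)" using b by simp
    then have "cell_step C b (x+2,y)" unfolding cell_step_def using s1 s2 bc cc nC by blast
    then have "(x+2,y) \<in> R" using bR by (auto simp: R_def intro: rtranclp.rtrancl_into_rtrancl)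
    then have "x + 2 \<le> m" using maxb by fastforce
    then show False using bm b by simp
  qed
  have "(cell_step C)\<^sup>*\<^sup>* h b" using bR by (simp add: R_def)
  then show ?thesis using bc s1 sC by blast
qed

lemma finite_inner_cells:
  assumes fC: "finite C" and neC: "\<And>e. e \<in> C \<Longrightarrow> e \<noteq> {}"
  shows "finite {h. inner_cell C h}"
proof -
  define B where "B = {c. is_cell c \<and> hex_edges c \<inter> C \<noteq> {}}"
  have fB: "finite B"
  proof -
    have "B \<subseteq> (\<Union>e\<in>C. {c. e \<in> hex_edges c})" by (auto simp: B_def)
    moreover have "finite (\<Union>e\<in>C. {c. e \<in> hex_edges c})"
    proof (rule finite_UN_I[OF fC])
      fix e assume "e \<in> C"
      then obtain p where "p \<in> e" using neC by blast
      then show "finite {c. e \<in> hex_edges c}" by (rule finite_cells_containing_edge)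
    qed
    ultimately show ?thesis by (rule finite_subset)
  qed
  let ?U = "\<Union>b\<in>{b\<in>B. finite {h'. (cell_step C)\<^sup>*\<^sup>* b h'}}. {h'. (cell_step C)\<^sup>*\<^sup>* b h'}"
  have "{h. inner_cell C h} \<subseteq> ?U"
  proof
    fix h assume "h \<in> {h. inner_cell C h}"
    then have ih: "inner_cell C h" by simp
    obtain b where b: "(cell_step C)\<^sup>*\<^sup>* h b" "is_cell b" "hex_edges b \<inter> C \<noteq> {}"
      using inner_cell_reaches_cycle[OF ih] by blast
    have bB: "b \<in> B" using b by (simp add: B_def)
    have hb: "(cell_step C)\<^sup>*\<^sup>* b h" by (rule sympD[OF symp_rtranclp[OF symp_cell_step] b(1)])
    have "{h'. (cell_step C)\<^sup>*\<^sup>* b h'} \<subseteq> {h'. (cell_step C)\<^sup>*\<^sup>* h h'}"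
      using b(1) by (auto intro: rtranclp_trans)
    then have "finite {h'. (cell_step C)\<^sup>*\<^sup>* b h'}" using ih by (auto simp: inner_cell_def intro: finite_subset)
    then show "h \<in> ?U" using bB hb by blast
  qed
  moreover have "finite ?U" using fB by (intro finite_UN_I) auto
  ultimately show ?thesis by (rule finite_subset)
qed

lemma lat_adj_neq: "lat_adj u v \<Longrightarrow> u \<noteq> v"
  by (cases u, cases v) (auto simp: lat_adj_def)

lemma hexagon_graph_hexagonal_system:
  assumes cycle: "lattice_cycle vs"
  shows "hexagon_graph (hs_V vs) (hs_E vs) (hs_hex vs)"
proof
  have cycle_edge: "\<exists>x y. x \<noteq> y \<and> e = {x, y}" if e: "e \<in> cyc_edges vs" for e
  proof -
    obtain i where i: "i < length vs" "e = {vs ! i, vs ! ((i + 1) mod length vs)}"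
      using e by (auto simp: cyc_edges_def)
    have "lat_adj (vs ! i) (vs ! ((i + 1) mod length vs))"
      using cycle i(1) by (simp add: lattice_cycle_def)
    then show ?thesis using i(2) lat_adj_neq by blast
  qed
  have hexE: "\<exists>c. inner_cell (cyc_edges vs) c \<and> h = hex_edges c" if "h \<in> hs_hex vs" for h
    using that by (auto simp: hs_hex_def)
  show "\<exists>x y. x \<noteq> y \<and> e = {x, y}" if "e \<in> hs_E vs" for e
  proof -
    have "e \<in> cyc_edges vs \<or> (\<exists>c. e \<in> hex_edges c)"
      using that by (auto simp: hs_E_def hs_hex_def)
    then show ?thesis using cycle_edge hexagon_edge_doubleton[OF is_hexagon_hex_edges] by blast
  qed
  show "e \<subseteq> hs_V vs" if "e \<in> hs_E vs" for e using that by (auto simp: hs_V_def)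
  show "is_hexagon h" if "h \<in> hs_hex vs" for h using hexE[OF that] is_hexagon_hex_edges by blast
  show "h \<subseteq> hs_E vs" if "h \<in> hs_hex vs" for h using that by (auto simp: hs_E_def)
  show "card (h \<inter> h') \<le> 1" if hh': "h \<in> hs_hex vs" "h' \<in> hs_hex vs" "h \<noteq> h'" for h h'
  proof -
    obtain c where c: "inner_cell (cyc_edges vs) c" "h = hex_edges c" using hexE hh'(1) by blast
    obtain c' where c': "inner_cell (cyc_edges vs) c'" "h' = hex_edges c'" using hexE hh'(2) by blast
    have "is_cell c" "is_cell c'" using c c' by (auto simp: inner_cell_def)
    moreover have "c \<noteq> c'" using hh'(3) c c' by auto
    ultimately have "\<forall>a\<in>h \<inter> h'. \<forall>b\<in>h \<inter> h'. a = b"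
      using hex_edges_common_edge_unique c(2) c'(2) by blast
    moreover have "finite (h \<inter> h')" using c(2) finite_hexagon[OF is_hexagon_hex_edges] by blast
    ultimately show ?thesis by (simp add: card_le_Suc0_iff_eq)
  qed
  show "finite (hs_hex vs)"
  proof -
    have "e \<noteq> {}" if "e \<in> cyc_edges vs" for e using cycle_edge[OF that] by blast
    then have "finite {h. inner_cell (cyc_edges vs) h}" using finite_inner_cells finite_cyc_edges by blast
    then show ?thesis by (simp add: hs_hex_def)
  qed
qed

theorem theorem1:
  fixes vs :: "vert list"
  assumes "lattice_cycle vs"
    and "kekulean (hs_V vs) (hs_E vs)"
  shows "\<forall>i. clar_number_z (hs_V vs) (hs_E vs) (hs_hex vs) i
             = cube_count (res_verts (hs_V vs) (hs_E vs)) (res_adj (hs_hex vs)) i"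
proof
  fix i
  interpret hexagon_graph "hs_V vs" "hs_E vs" "hs_hex vs"
    using hexagon_graph_hexagonal_system[OF assms(1)] .
  show "clar_number_z (hs_V vs) (hs_E vs) (hs_hex vs) i
      = cube_count (res_verts (hs_V vs) (hs_E vs)) (res_adj (hs_hex vs)) i"
    by (rule clar_number_z_eq_cube_count)
qed

end
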